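(* Let $H$ be a $\theta$-stable Cartan subgroup of $G$ with a real root $\alpha$, let $J$ be the Cayley transform of $H$ with respect to $\alpha$, and let $c$ be as in the context. Assume $\Phi^+$ is a special set of positive roots for $H$, $\alpha\in\Phi^+$, and $\Phi^+_J=c^*\Phi^+$ is a special set of positive roots for $J$. Then $\alpha$ is a simple root of $\Phi^+_r=\Phi^+\cap\Phi_r$.
   Context: $G(\mathbb C)$ is a connected reductive complex algebraic group defined over $\mathbb R$ with complex conjugation $\sigma$, real points $G$, Cartan involution $\theta$. For a Cartan subgroup, a root $\alpha$ is real if $\sigma\alpha=\alpha$, imaginary if $\sigma\alpha=-\alpha$, complex otherwise; $\Phi_r$ is the set of real roots. A positive system $\Phi^+$ is special if $\sigma(\gamma)\in\Phi^+$ for every non-imaginary $\gamma\in\Phi^+$. The Cayley transform $J$ of $H$ with respect to the real root $\alpha$ is the $\theta$-stable Cartan subgroup with $\mathfrak h\cap\mathfrak j=\ker(\alpha|_{\mathfrak h})$ having a noncompact imaginary root $\beta$ corresponding to $\alpha$; $c$ is an element of the complex adjoint group with $\mathrm{Ad}(c)$ trivial on $\mathfrak h(\mathbb C)\cap\mathfrak j(\mathbb C)$, $\mathrm{Ad}(c)(\mathfrak j(\mathbb C))=\mathfrak h(\mathbb C)$, and $c^*$ the induced bijection from roots of $H$ to roots of $J$ with $c^*(\alpha)=\beta$. *)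

theory Defs
  imports "HOL-Analysis.Analysis"
begin

text \<open>Roots of a theta-stable Cartan subgroup are
  modelled as a finite reduced crystallographic root system in a real Euclidean
  space (the real span of the roots, with the form induced by an invariant form);
  complex conjugation acts on roots through a linear isometric involution.\<close>

definition refl :: "'a::euclidean_space \<Rightarrow> 'a \<Rightarrow> 'a" where
  "refl a b = b - (2 * (b \<bullet> a) / (a \<bullet> a)) *\<^sub>R a"

definition root_system :: "'a::euclidean_space set \<Rightarrow> bool" where
  "root_system R \<longleftrightarrow> finite R \<and> 0 \<notin> R \<and>
     (\<forall>a\<in>R. \<forall>b\<in>R. refl a b \<in> R \<and> 2 * (b \<bullet> a) / (a \<bullet> a) \<in> \<int>) \<and>
     (\<forall>a\<in>R. \<forall>t::real. t *\<^sub>R a \<in> R \<longrightarrow> t = 1 \<or> t = -1)"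

definition positive_system :: "'a::euclidean_space set \<Rightarrow> 'a set \<Rightarrow> bool" where
  "positive_system R P \<longleftrightarrow>
     (\<exists>f :: 'a \<Rightarrow> real. linear f \<and> (\<forall>a\<in>R. f a \<noteq> 0) \<and> P = {a\<in>R. f a > 0})"

definition root_involution :: "'a::euclidean_space set \<Rightarrow> ('a \<Rightarrow> 'a) \<Rightarrow> bool" where
  "root_involution R s \<longleftrightarrow> linear s \<and> (\<forall>x. s (s x) = x) \<and>
     (\<forall>x y. s x \<bullet> s y = x \<bullet> y) \<and> s ` R = R"

definition real_roots :: "'a::euclidean_space set \<Rightarrow> ('a \<Rightarrow> 'a) \<Rightarrow> 'a set" where
  "real_roots R s = {a\<in>R. s a = a}"

definition imaginary_root :: "('a::euclidean_space \<Rightarrow> 'a) \<Rightarrow> 'a \<Rightarrow> bool" where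
  "imaginary_root s a \<longleftrightarrow> s a = - a"

definition special :: "('a::euclidean_space \<Rightarrow> 'a) \<Rightarrow> 'a set \<Rightarrow> bool" where
  "special s P \<longleftrightarrow> (\<forall>g\<in>P. \<not> imaginary_root s g \<longrightarrow> s g \<in> P)"

definition simple_root :: "'a::euclidean_space set \<Rightarrow> 'a \<Rightarrow> bool" where
  "simple_root P a \<longleftrightarrow> a \<in> P \<and> \<not> (\<exists>b\<in>P. \<exists>g\<in>P. a = b + g)"

text \<open>Cayley transform data (dual picture): RJ is the root system of J with
  conjugation sJ, c is the bijection on roots (induced by Ad(c)), an isometric
  linear isomorphism with c alpha = beta, beta imaginary for J, and, since Ad(c)
  is trivial on the common part ker(alpha) of h and j and conjugation agrees there,
  sJ (c x) = c (s x) for x orthogonal to alpha.\<close>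
definition cayley_transform ::
  "'a::euclidean_space set \<Rightarrow> ('a \<Rightarrow> 'a) \<Rightarrow> 'a \<Rightarrow>
   'b::euclidean_space set \<Rightarrow> ('b \<Rightarrow> 'b) \<Rightarrow> 'b \<Rightarrow> ('a \<Rightarrow> 'b) \<Rightarrow> bool" where
  "cayley_transform R s alpha RJ sJ beta c \<longleftrightarrow>
     alpha \<in> R \<and> s alpha = alpha \<and>
     root_system RJ \<and> root_involution RJ sJ \<and>
     linear c \<and> bij c \<and> (\<forall>x y. c x \<bullet> c y = x \<bullet> y) \<and> c ` R = RJ \<and>
     c alpha = beta \<and> beta \<in> RJ \<and> imaginary_root sJ beta \<and>
     (\<forall>x. x \<bullet> alpha = 0 \<longrightarrow> sJ (c x) = c (s x))"

end

theory Submission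
  imports Defs
begin

text \<open>If \<open>\<alpha> = \<beta> + \<gamma>\<close> with \<open>\<beta>, \<gamma>\<close> positive real roots, then neither summand is proportional
  to \<open>\<alpha>\<close>. Because \<open>Ad(c)\<close> fixes \<open>ker \<alpha>\<close> while \<open>\<sigma>\<^sub>J\<close> negates \<open>c\<^sup>*\<alpha>\<close>, conjugation on \<open>J\<close> acts on
  \<open>c\<^sup>*\<beta>\<close> as \<open>c\<^sup>*(s\<^sub>\<alpha>\<beta>)\<close>; this is not \<open>-c\<^sup>*\<beta>\<close>, so \<open>c\<^sup>*\<beta>\<close> is not imaginary and specialness of
  \<open>c\<^sup>*\<Phi>\<^sup>+\<close> forces \<open>s\<^sub>\<alpha>\<beta> \<in> \<Phi>\<^sup>+\<close>, and likewise \<open>s\<^sub>\<alpha>\<gamma> \<in> \<Phi>\<^sup>+\<close>. But \<open>s\<^sub>\<alpha>\<beta> + s\<^sub>\<alpha>\<gamma> = s\<^sub>\<alpha>\<alpha> = -\<alpha>\<close> is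
  negative.\<close>

lemma linear_refl: "linear (refl a)"
  by (rule linearI) (simp_all add: refl_def inner_add_left add_divide_distrib
      distrib_left scaleR_add_left algebra_simps)

lemma refl_self: "a \<noteq> 0 \<Longrightarrow> refl a a = - a"
  by (simp add: refl_def scaleR_2)

lemma refl_eq_neg_imp_multiple:
  assumes "refl a b = - b"
  shows "b = (b \<bullet> a / (a \<bullet> a)) *\<^sub>R a"
proof -
  have "2 *\<^sub>R b = (2 * (b \<bullet> a) / (a \<bullet> a)) *\<^sub>R a"
    using assms unfolding refl_def by (simp add: scaleR_2 algebra_simps)
  then have "(1/2) *\<^sub>R (2 *\<^sub>R b) = (1/2) *\<^sub>R ((2 * (b \<bullet> a) / (a \<bullet> a)) *\<^sub>R a)"
    by simp
  then show ?thesis by simp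
qed

lemma positive_system_subset: "positive_system R P \<Longrightarrow> P \<subseteq> R"
  unfolding positive_system_def by auto

lemma positive_system_sum_not_neg:
  assumes "positive_system R P" and "x \<in> P" "y \<in> P" "z \<in> P"
  shows "x + y \<noteq> - z"
proof
  assume sum: "x + y = - z"
  obtain f :: "'a \<Rightarrow> real" where f: "linear f" and P: "P = {a\<in>R. f a > 0}"
    using assms(1) unfolding positive_system_def by auto
  have "f x + f y = - f z"
    using sum f by (metis linear_add linear_neg)
  moreover have "f x > 0" "f y > 0" "f z > 0"
    using assms(2-4) P by auto
  ultimately show False by linarith
qed

lemma root_system_summand_not_multiple:
  assumes R: "root_system R" and "a \<in> R" "x \<in> R" "y \<in> R" and sum: "a = x + y"
  shows "x \<noteq> t *\<^sub>R a"
proof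
  assume x: "x = t *\<^sub>R a"
  have zero: "0 \<notin> R" and reduced: "\<And>u. u *\<^sub>R a \<in> R \<Longrightarrow> u = 1 \<or> u = -1"
    using R \<open>a \<in> R\<close> unfolding root_system_def by auto
  consider "t = 1" | "t = -1"
    using reduced \<open>x \<in> R\<close> x by blast
  then show False
  proof cases
    case 1
    then have "y = 0" using sum x by simp
    then show False using zero \<open>y \<in> R\<close> by simp
  next
    case 2
    then have "y = 2 *\<^sub>R a" using sum x by (simp add: algebra_simps scaleR_2)
    then show False using reduced[of 2] \<open>y \<in> R\<close> by simp
  qed
qed

lemma cayley_transform_conj_real:
  assumes ct: "cayley_transform R s alpha RJ sJ beta c"
    and s: "root_involution R s" and "alpha \<noteq> 0" and b: "s b = b"
  shows "sJ (c b) = c (refl alpha b)"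
proof -
  define t where "t = (b \<bullet> alpha) / (alpha \<bullet> alpha)"
  define b0 where "b0 = b - t *\<^sub>R alpha"
  have c: "linear c" and sJ: "linear sJ"
    and sa: "s alpha = alpha" and ca: "c alpha = beta" and sJb: "sJ beta = - beta"
    and comm: "\<And>x. x \<bullet> alpha = 0 \<Longrightarrow> sJ (c x) = c (s x)"
    using ct unfolding cayley_transform_def root_involution_def imaginary_root_def by auto
  have "linear s" using s unfolding root_involution_def by simp
  have "b0 \<bullet> alpha = 0"
    using \<open>alpha \<noteq> 0\<close> unfolding b0_def t_def by (simp add: inner_diff_left)
  moreover have "s b0 = b0"
    unfolding b0_def using \<open>linear s\<close> b sa by (simp add: linear_diff linear_scale)
  ultimately have sJb0: "sJ (c b0) = c b0"
    using comm by simp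
  have "c b = c b0 + t *\<^sub>R beta"
    unfolding b0_def using c ca by (simp add: linear_diff linear_scale)
  then have "sJ (c b) = sJ (c b0) + t *\<^sub>R sJ beta"
    using sJ by (simp add: linear_add linear_scale)
  also have "\<dots> = c (b0 - t *\<^sub>R alpha)"
    using sJb0 sJb c ca by (simp add: linear_diff linear_scale)
  also have "b0 - t *\<^sub>R alpha = refl alpha b"
    unfolding b0_def t_def refl_def by (simp add: algebra_simps flip: scaleR_add_left)
  finally show ?thesis .
qed

lemma special_cayley_refl_mem:
  assumes ct: "cayley_transform R s alpha RJ sJ beta c"
    and s: "root_involution R s" and "alpha \<noteq> 0"
    and special: "special sJ (c ` P)"
    and "b \<in> P" "s b = b" and not_multiple: "\<And>t. b \<noteq> t *\<^sub>R alpha"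
  shows "refl alpha b \<in> P"
proof -
  have "linear c" "inj c"
    using ct unfolding cayley_transform_def by (auto simp: bij_is_inj)
  have conj: "sJ (c b) = c (refl alpha b)"
    using cayley_transform_conj_real[OF ct s \<open>alpha \<noteq> 0\<close> \<open>s b = b\<close>] .
  have "\<not> imaginary_root sJ (c b)"
  proof
    assume "imaginary_root sJ (c b)"
    then have "c (refl alpha b) = c (- b)"
      using conj \<open>linear c\<close> unfolding imaginary_root_def by (simp add: linear_neg)
    then have "refl alpha b = - b"
      using \<open>inj c\<close> by (simp add: inj_eq)
    then show False
      using refl_eq_neg_imp_multiple not_multiple by blast
  qed
  then have "c (refl alpha b) \<in> c ` P"
    using special \<open>b \<in> P\<close> conj unfolding special_def by (metis imageI)
  then show ?thesis
    using \<open>inj c\<close> by (simp add: inj_image_mem_iff)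
qed

theorem mainTheorem14:
  fixes R :: "'a::euclidean_space set" and s :: "'a \<Rightarrow> 'a" and alpha :: 'a
    and RJ :: "'b::euclidean_space set" and sJ :: "'b \<Rightarrow> 'b" and beta :: 'b
    and c :: "'a \<Rightarrow> 'b" and P :: "'a set"
  assumes "root_system R" and "root_involution R s"
    and "alpha \<in> real_roots R s"
    and "cayley_transform R s alpha RJ sJ beta c"
    and "positive_system R P" and "special s P" and "alpha \<in> P"
    and "positive_system RJ (c ` P)" and "special sJ (c ` P)"
  shows "simple_root (P \<inter> real_roots R s) alpha"
  unfolding simple_root_def
proof (intro conjI notI)
  show "alpha \<in> P \<inter> real_roots R s" using assms(3,7) by simp
next
  assume "\<exists>b\<in>P \<inter> real_roots R s. \<exists>g\<in>P \<inter> real_roots R s. alpha = b + g"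
  then obtain b g where b: "b \<in> P" "s b = b" and g: "g \<in> P" "s g = g" and sum: "alpha = b + g"
    unfolding real_roots_def by auto
  have PR: "P \<subseteq> R" using assms(5) by (rule positive_system_subset)
  have "alpha \<noteq> 0" using assms(1,7) PR unfolding root_system_def by auto
  have "alpha \<in> R" "b \<in> R" "g \<in> R" using assms(7) b g PR by auto
  have "refl alpha b \<in> P" "refl alpha g \<in> P"
    using special_cayley_refl_mem[OF assms(4,2) \<open>alpha \<noteq> 0\<close> assms(9)] b g
      root_system_summand_not_multiple[OF assms(1) \<open>alpha \<in> R\<close>] sum
      \<open>b \<in> R\<close> \<open>g \<in> R\<close>
    by (metis add.commute)+
  moreover have "refl alpha b + refl alpha g = - alpha"
    using linear_add[OF linear_refl] refl_self[OF \<open>alpha \<noteq> 0\<close>] sum by metis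
  ultimately show False
    using positive_system_sum_not_neg[OF assms(5)] assms(7) by blast
qed

end
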